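(* Let $q_1,q_2$ be positive probability densities w.r.t. $\mu$ on a common support $\Omega$, let $n\ge1$ and $s_1,s_2\in(0,1)$ with $s_1+s_2=1$, and let $\pi\in(0,1)$. Define $$A(q_1,q_2)=\frac{1}{ns_1s_2}\left[\left(\int_\Omega\frac{q_1q_2}{s_1q_1+s_2q_2}\,d\mu\right)^{-1}-1\right].$$ Then, with the convention $0^{-2}=+\infty$, $$A(q_1,q_2)\le\frac{1}{ns_1s_2}\left[\left(1-\min\!\left(1,\sqrt{JS_\pi(q_1,q_2)/\min(\pi,1-\pi)}\right)\right)^{-2}-1\right],$$ $$A(q_1,q_2)\le\frac{1}{ns_1s_2}\left[\left(1-\min\!\left(1,\sqrt{2KL(q_1,q_2)}\right)\right)^{-2}-1\right],\qquad A(q_1,q_2)\le\frac{1}{ns_1s_2}\left[\left(1-\min\!\left(1,\sqrt{2KL(q_2,q_1)}\right)\right)^{-2}-1\right].$$ In particular, if $JS_\pi(q_1,q_2)\to0$, or $KL(q_1,q_2)\to0$, or $KL(q_2,q_1)\to0$ (with $n,s_1,s_2$ fixed), then $A(q_1,q_2)\to0$.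
   Context: $KL(p_1,p_2)=\int\log(p_1/p_2)\,p_1\,d\mu$. The weighted Jensen–Shannon divergence is $JS_\pi(q_1,q_2)=\pi KL(q_1,q_\pi)+(1-\pi)KL(q_2,q_\pi)$ with $q_\pi=\pi q_1+(1-\pi)q_2$. $A(q_1,q_2)$ is the first-order term of the asymptotic relative mean square error of the asymptotically optimal Bridge estimator of $Z_1/Z_2$ based on i.i.d. samples of sizes $ns_1$ and $ns_2$ from $q_1$ and $q_2$. *)

theory Defs
  imports "HOL-Analysis.Analysis"
begin

text \<open>Positive probability density w.r.t. the reference measure M on the common support
  Omega = space M.\<close>
definition pos_density :: "'a measure \<Rightarrow> ('a \<Rightarrow> real) \<Rightarrow> bool" where
  "pos_density M q \<longleftrightarrow> q \<in> borel_measurable M \<and> (\<forall>x\<in>space M. 0 < q x)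
     \<and> integrable M q \<and> integral\<^sup>L M q = 1"

text \<open>Kullback-Leibler divergence KL(p1,p2) = int log(p1/p2) p1 dmu, valued in the extended
  reals: it is +infinity when the integrand is not integrable (its negative part is always
  integrable for probability densities, so this is the usual convention).\<close>
definition KL :: "'a measure \<Rightarrow> ('a \<Rightarrow> real) \<Rightarrow> ('a \<Rightarrow> real) \<Rightarrow> ereal" where
  "KL M p1 p2 =
     (if integrable M (\<lambda>x. ln (p1 x / p2 x) * p1 x)
      then ereal (integral\<^sup>L M (\<lambda>x. ln (p1 x / p2 x) * p1 x)) else \<infinity>)"

definition JS :: "'a measure \<Rightarrow> real \<Rightarrow> ('a \<Rightarrow> real) \<Rightarrow> ('a \<Rightarrow> real) \<Rightarrow> ereal" where
  "JS M \<pi> q1 q2 =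
     (let q\<pi> = (\<lambda>x. \<pi> * q1 x + (1 - \<pi>) * q2 x)
      in ereal \<pi> * KL M q1 q\<pi> + ereal (1 - \<pi>) * KL M q2 q\<pi>)"

definition A_bridge :: "'a measure \<Rightarrow> real \<Rightarrow> real \<Rightarrow> real \<Rightarrow> ('a \<Rightarrow> real) \<Rightarrow> ('a \<Rightarrow> real) \<Rightarrow> real" where
  "A_bridge M n s1 s2 q1 q2 =
     1 / (n * s1 * s2) *
       (inverse (integral\<^sup>L M (\<lambda>x. q1 x * q2 x / (s1 * q1 x + s2 * q2 x))) - 1)"

definition bound_fun :: "real \<Rightarrow> ereal \<Rightarrow> ereal" where
  "bound_fun c t =
     (if 1 \<le> min 1 (sqrt (real_of_ereal t)) \<or> t = \<infinity> then \<infinity>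
      else ereal (c * ((1 - min 1 (sqrt (real_of_ereal t))) powi (-2) - 1)))"

end

theory Submission
  imports Defs
begin

text \<open>Write \<open>BC = \<integral> sqrt (q1 q2)\<close> for the Bhattacharyya coefficient, so that \<open>1 - BC\<close> is the
  squared Hellinger distance. Integrating the pointwise inequality
  \<open>2 c sqrt (q1 q2) - c\<^sup>2 (s1 q1 + s2 q2) \<le> q1 q2 / (s1 q1 + s2 q2)\<close> with \<open>c = BC\<close> gives
  \<open>BC\<^sup>2 \<le> \<integral> q1 q2 / (s1 q1 + s2 q2)\<close>, hence \<open>A \<le> (BC\<^sup>-\<^sup>2 - 1) / (n s1 s2)\<close>. On the other hand
  \<open>ln x \<ge> 1 - 1/x\<close> applied to \<open>sqrt (q1/q2)\<close> bounds the Hellinger distance by \<open>KL/2\<close>, and,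
  applied against the mixture \<open>q\<pi>\<close>, by \<open>JS\<^sub>\<pi> / min \<pi> (1 - \<pi>)\<close>. Since \<open>1 - BC \<le> t \<le> sqrt t\<close>
  for \<open>t \<le> 1\<close>, this yields the bounds, and \<open>BC \<longrightarrow> 1\<close> yields the limits.\<close>

lemma two_mult_sub_sqrt_le_ln_div_mult:
  fixes a b :: real assumes "0 < a" "0 < b"
  shows "2 * a - 2 * sqrt (a * b) \<le> ln (a / b) * a"
proof -
  define r where "r = sqrt b / sqrt a"
  have r: "0 < r" using assms unfolding r_def by simp
  have "ln (a / b) = - 2 * ln r"
    using assms unfolding r_def by (simp add: ln_div ln_sqrt)
  also have "\<dots> \<ge> 2 * (1 - r)" using ln_le_minus_one[OF r] by simp
  finally have "2 * (1 - r) * a \<le> ln (a / b) * a" using assms by (intro mult_right_mono) auto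
  moreover have "r * a = sqrt (a * b)"
    using assms unfolding r_def by (simp add: real_sqrt_mult field_simps)
  ultimately show ?thesis by (simp add: algebra_simps)
qed

lemma two_mult_sub_sq_le_sq_div:
  fixes c h w :: real assumes "0 < w"
  shows "2 * c * h - c\<^sup>2 * w \<le> h\<^sup>2 / w"
proof -
  have "h\<^sup>2 / w - (2 * c * h - c\<^sup>2 * w) = (h - c * w)\<^sup>2 / w"
    using assms by (simp add: field_simps power2_eq_square)
  thus ?thesis using assms by (metis diff_ge_0_iff_ge divide_nonneg_pos zero_le_power2)
qed

lemma mult_div_weighted_sum_le:
  fixes a b s1 s2 :: real assumes "0 < a" "0 < b" "0 < s1" "0 < s2" "s1 + s2 = 1"
  shows "a * b / (s1 * a + s2 * b) \<le> s2 * a + s1 * b"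
proof -
  have "(s1 * a + s2 * b) * (s2 * a + s1 * b) = a * b * (s1 + s2)\<^sup>2 + s1 * s2 * (a - b)\<^sup>2"
    by (simp add: algebra_simps power2_eq_square)
  hence "a * b \<le> (s1 * a + s2 * b) * (s2 * a + s1 * b)" using assms by simp
  moreover have "0 < s1 * a + s2 * b" using assms by (simp add: add_pos_pos)
  ultimately show ?thesis by (simp add: pos_divide_le_eq mult.commute)
qed

lemma hellinger_le_JS_integrand:
  fixes a b p :: real assumes "0 < a" "0 < b" "0 < p" "p < 1"
  defines "q \<equiv> p * a + (1 - p) * b"
  shows "min p (1 - p) / 2 * (a + b - 2 * sqrt (a * b))
     \<le> p * (ln (a / q) * a) + (1 - p) * (ln (b / q) * b)"
proof -
  have q: "0 < q" using assms unfolding q_def by (simp add: add_pos_pos)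
  define x y z where "x = sqrt a" and "y = sqrt b" and "z = sqrt q"
  have sq: "a = x\<^sup>2" "b = y\<^sup>2" "q = z\<^sup>2" using assms q unfolding x_def y_def z_def by auto
  have sqrt_mult: "sqrt (a * b) = x * y" "sqrt (a * q) = x * z" "sqrt (b * q) = y * z"
    unfolding x_def y_def z_def by (simp_all add: real_sqrt_mult)
  have "min p (1 - p) / 2 * (a + b - 2 * sqrt (a * b)) = min p (1 - p) / 2 * (x - y)\<^sup>2"
    using sq sqrt_mult by (simp add: power2_eq_square algebra_simps)
  also have "\<dots> \<le> min p (1 - p) * ((x - z)\<^sup>2 + (y - z)\<^sup>2)"
  proof -
    have "(x - y)\<^sup>2 \<le> 2 * ((x - z)\<^sup>2 + (y - z)\<^sup>2)"
      using zero_le_power2[of "x + y - 2 * z"] by (simp add: algebra_simps power2_eq_square)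
    thus ?thesis using assms by (simp add: mult_left_mono)
  qed
  also have "\<dots> \<le> p * (x - z)\<^sup>2 + (1 - p) * (y - z)\<^sup>2"
    by (simp add: distrib_left add_mono mult_right_mono)
  also have "\<dots> = p * (2 * a - 2 * sqrt (a * q)) + (1 - p) * (2 * b - 2 * sqrt (b * q))"
    using sq sqrt_mult q_def by (simp add: algebra_simps power2_eq_square)
  also have "\<dots> \<le> p * (ln (a / q) * a) + (1 - p) * (ln (b / q) * b)"
    using assms q by (intro add_mono mult_left_mono two_mult_sub_sqrt_le_ln_div_mult) auto
  finally show ?thesis .
qed

lemma pos_densityD:
  assumes "pos_density M q"
  shows "q \<in> borel_measurable M" "integrable M q" "integral\<^sup>L M q = 1" "\<And>x. x \<in> space M \<Longrightarrow> 0 < q x"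
  using assms unfolding pos_density_def by auto

definition bhattacharyya :: "'a measure \<Rightarrow> ('a \<Rightarrow> real) \<Rightarrow> ('a \<Rightarrow> real) \<Rightarrow> real" where
  "bhattacharyya M q1 q2 = integral\<^sup>L M (\<lambda>x. sqrt (q1 x * q2 x))"

lemma bhattacharyya_commute: "bhattacharyya M q1 q2 = bhattacharyya M q2 q1"
  unfolding bhattacharyya_def by (simp add: mult.commute)

context
  fixes M :: "'a measure" and q1 q2 :: "'a \<Rightarrow> real"
  assumes q1: "pos_density M q1" and q2: "pos_density M q2"
begin

lemmas q1D = pos_densityD[OF q1] and q2D = pos_densityD[OF q2]
lemmas [measurable] = q1D(1) q2D(1)

lemma integrable_sqrt_mult_densities: "integrable M (\<lambda>x. sqrt (q1 x * q2 x))"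
proof (rule Bochner_Integration.integrable_bound)
  show "integrable M (\<lambda>x. (q1 x + q2 x) / 2)"
    using q1D(2) q2D(2) by auto
  show "(\<lambda>x. sqrt (q1 x * q2 x)) \<in> borel_measurable M"
    by measurable
  show "AE x in M. norm (sqrt (q1 x * q2 x)) \<le> norm ((q1 x + q2 x) / 2)"
    using q1D(4) q2D(4) arith_geo_mean_sqrt
    by (intro AE_I2) (simp add: less_imp_le)
qed

lemma bhattacharyya_le_1: "bhattacharyya M q1 q2 \<le> 1"
proof -
  have "bhattacharyya M q1 q2 \<le> integral\<^sup>L M (\<lambda>x. (q1 x + q2 x) / 2)"
    unfolding bhattacharyya_def
    using q1D q2D arith_geo_mean_sqrt integrable_sqrt_mult_densities
    by (intro integral_mono) (auto simp: less_imp_le)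
  also have "\<dots> = 1" using q1D q2D by simp
  finally show ?thesis .
qed

context
  fixes s1 s2 :: real
  assumes s: "0 < s1" "0 < s2" "s1 + s2 = 1"
begin

lemma integrable_bridge_integrand:
  "integrable M (\<lambda>x. q1 x * q2 x / (s1 * q1 x + s2 * q2 x))"
proof (rule Bochner_Integration.integrable_bound)
  show "integrable M (\<lambda>x. s2 * q1 x + s1 * q2 x)" using q1D(2) q2D(2) by auto
  show "(\<lambda>x. q1 x * q2 x / (s1 * q1 x + s2 * q2 x)) \<in> borel_measurable M" by measurable
  show "AE x in M. norm (q1 x * q2 x / (s1 * q1 x + s2 * q2 x)) \<le> norm (s2 * q1 x + s1 * q2 x)"
  proof (intro AE_I2)
    fix x assume "x \<in> space M"
    then have "0 < q1 x" "0 < q2 x" using q1D(4) q2D(4) by auto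
    then show "norm (q1 x * q2 x / (s1 * q1 x + s2 * q2 x)) \<le> norm (s2 * q1 x + s1 * q2 x)"
      using s mult_div_weighted_sum_le[of "q1 x" "q2 x" s1 s2] by simp
  qed
qed

lemma bridge_integral_le_1:
  "integral\<^sup>L M (\<lambda>x. q1 x * q2 x / (s1 * q1 x + s2 * q2 x)) \<le> 1"
proof -
  have "integral\<^sup>L M (\<lambda>x. q1 x * q2 x / (s1 * q1 x + s2 * q2 x))
      \<le> integral\<^sup>L M (\<lambda>x. s2 * q1 x + s1 * q2 x)"
    using q1D q2D s mult_div_weighted_sum_le integrable_bridge_integrand by (intro integral_mono) auto
  also have "\<dots> = 1" using q1D q2D s by simp
  finally show ?thesis .
qed

lemma bhattacharyya_sq_le_bridge_integral:
  "(bhattacharyya M q1 q2)\<^sup>2 \<le> integral\<^sup>L M (\<lambda>x. q1 x * q2 x / (s1 * q1 x + s2 * q2 x))"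
proof -
  define c where "c = bhattacharyya M q1 q2"
  have "c\<^sup>2 = integral\<^sup>L M (\<lambda>x. 2 * c * sqrt (q1 x * q2 x) - c\<^sup>2 * (s1 * q1 x + s2 * q2 x))"
    using integrable_sqrt_mult_densities q1D q2D s
    by (simp add: c_def bhattacharyya_def power2_eq_square)
  also have "\<dots> \<le> integral\<^sup>L M (\<lambda>x. q1 x * q2 x / (s1 * q1 x + s2 * q2 x))"
  proof (intro integral_mono integrable_bridge_integrand)
    show "integrable M (\<lambda>x. 2 * c * sqrt (q1 x * q2 x) - c\<^sup>2 * (s1 * q1 x + s2 * q2 x))"
      using integrable_sqrt_mult_densities q1D(2) q2D(2) by auto
    fix x assume "x \<in> space M"
    then have "0 < q1 x" "0 < q2 x" using q1D(4) q2D(4) by auto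
    then show "2 * c * sqrt (q1 x * q2 x) - c\<^sup>2 * (s1 * q1 x + s2 * q2 x)
        \<le> q1 x * q2 x / (s1 * q1 x + s2 * q2 x)"
      using s two_mult_sub_sq_le_sq_div[of "s1 * q1 x + s2 * q2 x" c "sqrt (q1 x * q2 x)"]
      by (simp add: add_pos_pos)
  qed
  finally show ?thesis unfolding c_def .
qed

lemma A_bridge_bounds:
  assumes "n \<ge> 1" and "0 < bhattacharyya M q1 q2"
  shows "0 \<le> A_bridge M n s1 s2 q1 q2"
    and "A_bridge M n s1 s2 q1 q2
           \<le> 1 / (n * s1 * s2) * (inverse ((bhattacharyya M q1 q2)\<^sup>2) - 1)"
proof -
  define I where "I = integral\<^sup>L M (\<lambda>x. q1 x * q2 x / (s1 * q1 x + s2 * q2 x))"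
  have A: "A_bridge M n s1 s2 q1 q2 = 1 / (n * s1 * s2) * (inverse I - 1)"
    unfolding A_bridge_def I_def ..
  have c: "0 < 1 / (n * s1 * s2)" using assms s by simp
  have I: "(bhattacharyya M q1 q2)\<^sup>2 \<le> I" "I \<le> 1"
    unfolding I_def using bhattacharyya_sq_le_bridge_integral bridge_integral_le_1 .
  have "0 < I" using I(1) assms(2) by (metis less_le_trans zero_less_power)
  show "0 \<le> A_bridge M n s1 s2 q1 q2"
    unfolding A using c \<open>0 < I\<close> I(2) by (simp add: one_le_inverse_iff)
  show "A_bridge M n s1 s2 q1 q2 \<le> 1 / (n * s1 * s2) * (inverse ((bhattacharyya M q1 q2)\<^sup>2) - 1)"
    unfolding A using c I(1) assms(2) by (intro mult_left_mono diff_right_mono le_imp_inverse_le) auto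
qed

end

lemma KL_ge_hellinger: "ereal (2 * (1 - bhattacharyya M q1 q2)) \<le> KL M q1 q2"
proof (cases "integrable M (\<lambda>x. ln (q1 x / q2 x) * q1 x)")
  case True
  have "2 * (1 - bhattacharyya M q1 q2) = integral\<^sup>L M (\<lambda>x. 2 * q1 x - 2 * sqrt (q1 x * q2 x))"
    using integrable_sqrt_mult_densities q1D by (simp add: bhattacharyya_def)
  also have "\<dots> \<le> integral\<^sup>L M (\<lambda>x. ln (q1 x / q2 x) * q1 x)"
    using q1D q2D two_mult_sub_sqrt_le_ln_div_mult integrable_sqrt_mult_densities True
    by (intro integral_mono) auto
  finally show ?thesis unfolding KL_def using True by simp
qed (simp add: KL_def)

lemma JS_ge_hellinger:
  assumes p: "0 < p" "p < 1"
  shows "ereal (min p (1 - p) * (1 - bhattacharyya M q1 q2)) \<le> JS M p q1 q2"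
proof -
  define f1 where "f1 = (\<lambda>x. ln (q1 x / (p * q1 x + (1 - p) * q2 x)) * q1 x)"
  define f2 where "f2 = (\<lambda>x. ln (q2 x / (p * q1 x + (1 - p) * q2 x)) * q2 x)"
  have JS: "JS M p q1 q2 = ereal p * (if integrable M f1 then ereal (integral\<^sup>L M f1) else \<infinity>)
      + ereal (1 - p) * (if integrable M f2 then ereal (integral\<^sup>L M f2) else \<infinity>)"
    unfolding JS_def KL_def Let_def f1_def f2_def ..
  show ?thesis
  proof (cases "integrable M f1 \<and> integrable M f2")
    case True
    define m where "m = min p (1 - p)"
    have "m * (1 - bhattacharyya M q1 q2)
        = integral\<^sup>L M (\<lambda>x. m / 2 * (q1 x + q2 x - 2 * sqrt (q1 x * q2 x)))"
      using integrable_sqrt_mult_densities q1D q2D by (simp add: bhattacharyya_def algebra_simps)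
    also have "\<dots> \<le> integral\<^sup>L M (\<lambda>x. p * f1 x + (1 - p) * f2 x)"
    proof (intro integral_mono)
      show "integrable M (\<lambda>x. m / 2 * (q1 x + q2 x - 2 * sqrt (q1 x * q2 x)))"
        using integrable_sqrt_mult_densities q1D(2) q2D(2) by auto
      show "integrable M (\<lambda>x. p * f1 x + (1 - p) * f2 x)" using True by auto
      fix x assume "x \<in> space M"
      then have "0 < q1 x" "0 < q2 x" using q1D(4) q2D(4) by auto
      from hellinger_le_JS_integrand[OF this p]
      show "m / 2 * (q1 x + q2 x - 2 * sqrt (q1 x * q2 x)) \<le> p * f1 x + (1 - p) * f2 x"
        unfolding f1_def f2_def m_def .
    qed
    also have "\<dots> = p * integral\<^sup>L M f1 + (1 - p) * integral\<^sup>L M f2" using True by simp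
    finally show ?thesis unfolding JS m_def using True by simp
  qed (use p in \<open>auto simp: JS\<close>)
qed

lemma hellinger_le_JS_div:
  assumes p: "0 < p" "p < 1"
  shows "ereal (1 - bhattacharyya M q1 q2) \<le> JS M p q1 q2 / ereal (min p (1 - p))"
  using JS_ge_hellinger[OF p] p by (subst ereal_le_divide_pos) (auto simp del: ereal_min)

lemma hellinger_le_two_KL: "ereal (1 - bhattacharyya M q1 q2) \<le> 2 * KL M q1 q2"
proof -
  have "0 \<le> 1 - bhattacharyya M q1 q2" using bhattacharyya_le_1 by simp
  then have "ereal (1 - bhattacharyya M q1 q2) \<le> 2 * ereal (2 * (1 - bhattacharyya M q1 q2))"
    by simp
  also have "\<dots> \<le> 2 * KL M q1 q2" using KL_ge_hellinger by (intro ereal_mult_left_mono) auto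
  finally show ?thesis .
qed

end

lemma A_bridge_le_bound_fun:
  assumes q1: "pos_density M q1" and q2: "pos_density M q2"
    and n: "n \<ge> 1" and s: "0 < s1" "0 < s2" "s1 + s2 = 1"
    and T: "ereal (1 - bhattacharyya M q1 q2) \<le> T"
  shows "ereal (A_bridge M n s1 s2 q1 q2) \<le> bound_fun (1 / (n * s1 * s2)) T"
proof (cases "T = \<infinity> \<or> 1 \<le> min 1 (sqrt (real_of_ereal T))")
  case True
  then show ?thesis unfolding bound_fun_def by auto
next
  case False
  define B where "B = bhattacharyya M q1 q2"
  have "0 \<le> 1 - B" using bhattacharyya_le_1[OF q1 q2] unfolding B_def by simp
  with T False obtain t where t: "T = ereal t" "1 - B \<le> t" "sqrt t < 1"
    unfolding B_def by (cases T) auto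
  have "0 \<le> t" using t(2) \<open>0 \<le> 1 - B\<close> by linarith
  have "t = sqrt t * sqrt t" using \<open>0 \<le> t\<close> by simp
  also have "\<dots> \<le> sqrt t" using t(3) \<open>0 \<le> t\<close> by (intro mult_left_le) auto
  finally have "t \<le> sqrt t" .
  have "1 - sqrt t \<le> B" "0 < 1 - sqrt t" using t \<open>t \<le> sqrt t\<close> by auto
  have c: "0 < 1 / (n * s1 * s2)" using n s by simp
  have "A_bridge M n s1 s2 q1 q2 \<le> 1 / (n * s1 * s2) * (inverse (B\<^sup>2) - 1)"
    using A_bridge_bounds(2)[OF q1 q2 s n] \<open>1 - sqrt t \<le> B\<close> \<open>0 < 1 - sqrt t\<close>
    unfolding B_def by simp
  also have "\<dots> \<le> 1 / (n * s1 * s2) * (inverse ((1 - sqrt t)\<^sup>2) - 1)"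
    using c \<open>1 - sqrt t \<le> B\<close> \<open>0 < 1 - sqrt t\<close>
    by (intro mult_left_mono diff_right_mono le_imp_inverse_le power_mono) auto
  also have "\<dots> = 1 / (n * s1 * s2) * ((1 - sqrt t) powi (-2) - 1)"
    by (simp add: power_int_minus)
  also have "ereal \<dots> = bound_fun (1 / (n * s1 * s2)) T"
    using t \<open>0 \<le> t\<close> by (simp add: bound_fun_def)
  finally show ?thesis by simp
qed

lemma LIMSEQ_zero_if_ereal_mult_le:
  fixes f :: "nat \<Rightarrow> real" and T :: "nat \<Rightarrow> ereal"
  assumes "0 < \<alpha>" and "\<And>k. 0 \<le> f k" and "\<And>k. ereal (\<alpha> * f k) \<le> T k" and "T \<longlonglongrightarrow> 0"
  shows "f \<longlonglongrightarrow> 0"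
proof -
  have "(\<lambda>k. ereal (\<alpha> * f k)) \<longlonglongrightarrow> ereal 0"
    unfolding zero_ereal_def[symmetric]
  proof (rule tendsto_sandwich[OF _ _ tendsto_const assms(4)])
    show "\<forall>\<^sub>F k in sequentially. 0 \<le> ereal (\<alpha> * f k)"
      using assms(1,2) by (simp add: less_imp_le)
    show "\<forall>\<^sub>F k in sequentially. ereal (\<alpha> * f k) \<le> T k"
      using assms(3) by simp
  qed
  then have "(\<lambda>k. \<alpha> * f k) \<longlonglongrightarrow> 0" by simp
  then have "(\<lambda>k. inverse \<alpha> * (\<alpha> * f k)) \<longlonglongrightarrow> inverse \<alpha> * 0" by (rule tendsto_mult_left)
  then show ?thesis using assms(1) by simp
qed

lemma A_bridge_tendsto_zero:
  fixes Q1 Q2 :: "nat \<Rightarrow> 'a \<Rightarrow> real"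
  assumes Q: "\<And>k. pos_density M (Q1 k)" "\<And>k. pos_density M (Q2 k)"
    and n: "n \<ge> 1" and s: "0 < s1" "0 < s2" "s1 + s2 = 1"
    and hellinger: "(\<lambda>k. 1 - bhattacharyya M (Q1 k) (Q2 k)) \<longlonglongrightarrow> 0"
  shows "(\<lambda>k. A_bridge M n s1 s2 (Q1 k) (Q2 k)) \<longlonglongrightarrow> 0"
proof -
  define B where "B = (\<lambda>k. bhattacharyya M (Q1 k) (Q2 k))"
  define c where "c = 1 / (n * s1 * s2)"
  have "(\<lambda>k. 1 - (1 - B k)) \<longlonglongrightarrow> 1 - 0"
    using hellinger unfolding B_def by (intro tendsto_diff tendsto_const)
  then have B: "B \<longlonglongrightarrow> 1" by simp
  then have pos: "\<forall>\<^sub>F k in sequentially. 0 < B k" by (rule order_tendstoD) simp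
  have lower: "\<forall>\<^sub>F k in sequentially. 0 \<le> A_bridge M n s1 s2 (Q1 k) (Q2 k)"
    using pos by eventually_elim (use A_bridge_bounds(1)[OF Q(1) Q(2) s n] in \<open>simp add: B_def\<close>)
  have upper: "\<forall>\<^sub>F k in sequentially.
      A_bridge M n s1 s2 (Q1 k) (Q2 k) \<le> c * (inverse ((B k)\<^sup>2) - 1)"
    using pos by eventually_elim (use A_bridge_bounds(2)[OF Q(1) Q(2) s n] in \<open>simp add: B_def c_def\<close>)
  have "(\<lambda>k. c * (inverse ((B k)\<^sup>2) - 1)) \<longlonglongrightarrow> c * (inverse (1\<^sup>2) - 1)"
    using B by (intro tendsto_intros) auto
  then have "(\<lambda>k. c * (inverse ((B k)\<^sup>2) - 1)) \<longlonglongrightarrow> 0" by simp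
  with lower upper show ?thesis by (rule tendsto_sandwich[OF _ _ tendsto_const])
qed

theorem proposition4:
  fixes M :: "'a measure" and q1 q2 :: "'a \<Rightarrow> real" and n s1 s2 \<pi> :: real
  assumes "pos_density M q1" and "pos_density M q2"
    and "n \<ge> 1" and "0 < s1" and "s1 < 1" and "0 < s2" and "s2 < 1" and "s1 + s2 = 1"
    and "0 < \<pi>" and "\<pi> < 1"
  shows "ereal (A_bridge M n s1 s2 q1 q2)
           \<le> bound_fun (1 / (n * s1 * s2)) (JS M \<pi> q1 q2 / ereal (min \<pi> (1 - \<pi>)))
       \<and> ereal (A_bridge M n s1 s2 q1 q2) \<le> bound_fun (1 / (n * s1 * s2)) (2 * KL M q1 q2)
       \<and> ereal (A_bridge M n s1 s2 q1 q2) \<le> bound_fun (1 / (n * s1 * s2)) (2 * KL M q2 q1)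
       \<and> (\<forall>Q1 Q2 :: nat \<Rightarrow> 'a \<Rightarrow> real.
           (\<forall>k. pos_density M (Q1 k) \<and> pos_density M (Q2 k)) \<longrightarrow>
           (((\<lambda>k. JS M \<pi> (Q1 k) (Q2 k)) \<longlonglongrightarrow> 0) \<or>
           ((\<lambda>k. KL M (Q1 k) (Q2 k)) \<longlonglongrightarrow> 0) \<or>
           ((\<lambda>k. KL M (Q2 k) (Q1 k)) \<longlonglongrightarrow> 0)) \<longrightarrow>
           (\<lambda>k. A_bridge M n s1 s2 (Q1 k) (Q2 k)) \<longlonglongrightarrow> 0)"
proof (intro conjI allI impI)
  note q = assms(1,2) and n = assms(3) and s = assms(4,6,8) and p = assms(9,10)
  note bound = A_bridge_le_bound_fun[OF q n s]
  show "ereal (A_bridge M n s1 s2 q1 q2)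
      \<le> bound_fun (1 / (n * s1 * s2)) (JS M \<pi> q1 q2 / ereal (min \<pi> (1 - \<pi>)))"
    using bound hellinger_le_JS_div[OF q p] .
  show "ereal (A_bridge M n s1 s2 q1 q2) \<le> bound_fun (1 / (n * s1 * s2)) (2 * KL M q1 q2)"
    using bound hellinger_le_two_KL[OF q] .
  show "ereal (A_bridge M n s1 s2 q1 q2) \<le> bound_fun (1 / (n * s1 * s2)) (2 * KL M q2 q1)"
    using bound hellinger_le_two_KL[OF q(2,1)] by (simp add: bhattacharyya_commute)
  fix Q1 Q2 :: "nat \<Rightarrow> 'a \<Rightarrow> real"
  assume "\<forall>k. pos_density M (Q1 k) \<and> pos_density M (Q2 k)"
  then have Q1: "\<And>k. pos_density M (Q1 k)" and Q2: "\<And>k. pos_density M (Q2 k)" by auto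
  have hellinger_nonneg: "\<And>k. 0 \<le> 1 - bhattacharyya M (Q1 k) (Q2 k)"
    using bhattacharyya_le_1[OF Q1 Q2] by simp
  assume "((\<lambda>k. JS M \<pi> (Q1 k) (Q2 k)) \<longlonglongrightarrow> 0) \<or> ((\<lambda>k. KL M (Q1 k) (Q2 k)) \<longlonglongrightarrow> 0) \<or>
    ((\<lambda>k. KL M (Q2 k) (Q1 k)) \<longlonglongrightarrow> 0)"
  then have "(\<lambda>k. 1 - bhattacharyya M (Q1 k) (Q2 k)) \<longlonglongrightarrow> 0"
  proof (elim disjE)
    show "(\<lambda>k. JS M \<pi> (Q1 k) (Q2 k)) \<longlonglongrightarrow> 0 \<Longrightarrow> ?thesis"
      using p JS_ge_hellinger[OF Q1 Q2 p]
      by (intro LIMSEQ_zero_if_ereal_mult_le[where \<alpha> = "min \<pi> (1 - \<pi>)"] hellinger_nonneg) auto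
    show "(\<lambda>k. KL M (Q1 k) (Q2 k)) \<longlonglongrightarrow> 0 \<Longrightarrow> ?thesis"
      using KL_ge_hellinger[OF Q1 Q2] by (intro LIMSEQ_zero_if_ereal_mult_le[where \<alpha> = 2] hellinger_nonneg) auto
    show "(\<lambda>k. KL M (Q2 k) (Q1 k)) \<longlonglongrightarrow> 0 \<Longrightarrow> ?thesis"
      using KL_ge_hellinger[OF Q2 Q1] by (intro LIMSEQ_zero_if_ereal_mult_le[where \<alpha> = 2] hellinger_nonneg)
        (auto simp: bhattacharyya_commute)
  qed
  then show "(\<lambda>k. A_bridge M n s1 s2 (Q1 k) (Q2 k)) \<longlonglongrightarrow> 0"
    by (rule A_bridge_tendsto_zero[OF Q1 Q2 n s])
qed

end
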